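(* Let $G=(A,B;E)$ be the incidence graph of a finite set $A$ of points and a finite set $B$ of open axis-parallel rectangles in $\mathbb{R}^2$, and let $k$ be a positive integer. Then $G\otimes k$ is isomorphic to the incidence graph of some finite set of points and some finite set of open axis-parallel rectangles in $\mathbb{R}^2$.
   Context: The incidence graph of points $P$ and rectangles $\mathcal{R}$ is the bipartite graph with classes $P$, $\mathcal{R}$, where $p$ and $R$ are adjacent iff $p\in R$. For a bipartite graph $G=(A,B;E)$ and positive integer $k$, $G\otimes k$ is the bipartite graph with vertex classes $A\times[k]$ and $(B\times[k])\cup A'$, where $A'$ is a disjoint copy of $A$; $(u,i)\in A\times[k]$ and $(v,j)\in B\times[k]$ are adjacent iff $i=j$ and $\{u,v\}\in E$; $(u,i)\in A\times[k]$ and $v\in A'$ are adjacent iff $v$ is the copy of $u$; there are no other edges. *)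

theory Defs
  imports Main "HOL.Real"
begin

type_synonym point = "real \<times> real"

definition open_rect :: "point set \<Rightarrow> bool" where
  "open_rect R \<longleftrightarrow> (\<exists>a b c d. a < b \<and> c < d \<and> R = {a<..<b} \<times> {c<..<d})"

(* A bipartite graph is given by its two vertex classes A, B and an
   adjacency relation E between A and B.  The incidence graph of points P
   and rectangles \<R> is (P, \<R>, \<lambda>p R. p \<in> R). *)
definition incidence :: "point \<Rightarrow> point set \<Rightarrow> bool" where
  "incidence p R \<longleftrightarrow> p \<in> R"

(* G \<otimes> k for G = (A,B;E): classes A \<times> [k] and (B \<times> [k]) \<union> A',
   where the disjoint union is modelled by the sum type (Inl for B \<times> [k],
   Inr for the copy A' of A). *)
definition tensorA :: "'a set \<Rightarrow> nat \<Rightarrow> ('a \<times> nat) set" where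
  "tensorA A k = A \<times> {1..k}"

definition tensorB :: "'a set \<Rightarrow> 'b set \<Rightarrow> nat \<Rightarrow> (('b \<times> nat) + 'a) set" where
  "tensorB A B k = Inl ` (B \<times> {1..k}) \<union> Inr ` A"

fun tensorE :: "('a \<Rightarrow> 'b \<Rightarrow> bool) \<Rightarrow> ('a \<times> nat) \<Rightarrow> (('b \<times> nat) + 'a) \<Rightarrow> bool" where
  "tensorE E (u, i) (Inl (v, j)) \<longleftrightarrow> i = j \<and> E u v"
| "tensorE E (u, i) (Inr v) \<longleftrightarrow> v = u"

definition bip_iso ::
  "'a set \<Rightarrow> 'b set \<Rightarrow> ('a \<Rightarrow> 'b \<Rightarrow> bool) \<Rightarrow> 'c set \<Rightarrow> 'd set \<Rightarrow> ('c \<Rightarrow> 'd \<Rightarrow> bool) \<Rightarrow> bool" where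
  "bip_iso A B E C D F \<longleftrightarrow>
     (\<exists>f g. bij_betw f A C \<and> bij_betw g B D \<and>
            (\<forall>x\<in>A. \<forall>y\<in>B. E x y \<longleftrightarrow> F (f x) (g y)))"

end

theory Submission
  imports Defs
begin

text \<open>Whether a point lies in an open rectangle depends only on strict comparisons between
coordinates. Shearing every point horizontally by a tiny multiple of its ordinate, and shrinking
every rectangle horizontally by a third of the least gap between the relevant abscissae, gives an
isomorphic configuration in which distinct points have distinct abscissae. Now stack \<open>k\<close>
copies of it vertically, with period larger than the height of a horizontal strip containing
everything, so that the \<open>i\<close>-th copy of a point meets only the \<open>i\<close>-th copies of
rectangles. The vertex of \<open>A'\<close> belonging to \<open>q\<close> becomes a thin vertical pole around the
abscissa of \<open>q\<close> crossing all copies; as abscissae are distinct, it contains exactly the copies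
of \<open>q\<close>. Since \<open>\<otimes> k\<close> respects isomorphism, this proves the theorem.\<close>

lemma bip_isoI_image:
  assumes "inj_on f A" and "inj_on g B" and "\<And>x y. x \<in> A \<Longrightarrow> y \<in> B \<Longrightarrow> E x y \<longleftrightarrow> F (f x) (g y)"
  shows "bip_iso A B E (f ` A) (g ` B) F"
  unfolding bip_iso_def using assms by (auto simp: bij_betw_def)

lemma bip_iso_trans:
  assumes "bip_iso A B E C D F" and "bip_iso C D F A' B' E'"
  shows "bip_iso A B E A' B' E'"
proof -
  obtain f g where f: "bij_betw f A C" and g: "bij_betw g B D"
    and fg: "\<forall>x\<in>A. \<forall>y\<in>B. E x y \<longleftrightarrow> F (f x) (g y)"
    using assms(1) unfolding bip_iso_def by blast
  obtain f' g' where f': "bij_betw f' C A'" and g': "bij_betw g' D B'"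
    and fg': "\<forall>x\<in>C. \<forall>y\<in>D. F x y \<longleftrightarrow> E' (f' x) (g' y)"
    using assms(2) unfolding bip_iso_def by blast
  have "\<forall>x\<in>A. \<forall>y\<in>B. E x y \<longleftrightarrow> E' ((f' \<circ> f) x) ((g' \<circ> g) y)"
    using fg fg' bij_betwE[OF f] bij_betwE[OF g] by simp
  then show ?thesis
    unfolding bip_iso_def using bij_betw_trans[OF f f'] bij_betw_trans[OF g g'] by blast
qed

lemma mem_tensorAE:
  assumes "x \<in> tensorA A k"
  obtains u i where "x = (u, i)" and "u \<in> A" and "1 \<le> i" and "i \<le> k"
  using assms unfolding tensorA_def by auto

lemma mem_tensorBE:
  assumes "y \<in> tensorB A B k"
  obtains (copy) v j where "y = Inl (v, j)" and "v \<in> B" and "1 \<le> j" and "j \<le> k"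
    | (orig) u where "y = Inr u" and "u \<in> A"
  using assms unfolding tensorB_def by auto

lemma bij_betw_map_sum:
  assumes "bij_betw f A C" and "bij_betw g B D"
  shows "bij_betw (map_sum f g) (Inl ` A \<union> Inr ` B) (Inl ` C \<union> Inr ` D)"
proof -
  have "inj_on (map_sum f g) (Inl ` A \<union> Inr ` B)"
  proof (rule inj_onI)
    fix x y assume "x \<in> Inl ` A \<union> Inr ` B" "y \<in> Inl ` A \<union> Inr ` B" "map_sum f g x = map_sum f g y"
    then show "x = y" using assms by (auto simp: bij_betw_def dest: inj_onD)
  qed
  moreover have "map_sum f g ` (Inl ` A \<union> Inr ` B) = Inl ` (f ` A) \<union> Inr ` (g ` B)"
    by force
  ultimately show ?thesis
    using assms by (simp add: bij_betw_def)
qed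

lemma bip_iso_tensor:
  assumes "bip_iso A B E C D F"
  shows "bip_iso (tensorA A k) (tensorB A B k) (tensorE E) (tensorA C k) (tensorB C D k) (tensorE F)"
proof -
  obtain f g where f: "bij_betw f A C" and g: "bij_betw g B D"
    and fg: "\<forall>x\<in>A. \<forall>y\<in>B. E x y \<longleftrightarrow> F (f x) (g y)"
    using assms unfolding bip_iso_def by blast
  have "bij_betw (map_prod f id) (tensorA A k) (tensorA C k)"
    unfolding tensorA_def using f by (intro bij_betw_map_prod bij_betw_id)
  moreover have "bij_betw (map_sum (map_prod g id) f) (tensorB A B k) (tensorB C D k)"
    unfolding tensorB_def using f g by (intro bij_betw_map_sum bij_betw_map_prod bij_betw_id)
  moreover have "tensorE E x y \<longleftrightarrow> tensorE F (map_prod f id x) (map_sum (map_prod g id) f y)"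
    if xA: "x \<in> tensorA A k" and yB: "y \<in> tensorB A B k" for x y
  proof -
    obtain u i where x: "x = (u, i)" and "u \<in> A" using xA by (blast elim: mem_tensorAE)
    from yB show ?thesis
    proof (cases rule: mem_tensorBE)
      case copy
      then show ?thesis using fg \<open>u \<in> A\<close> x by simp
    next
      case orig
      then show ?thesis using bij_betw_imp_inj_on[OF f] \<open>u \<in> A\<close> x by (auto dest: inj_onD)
    qed
  qed
  ultimately show ?thesis
    unfolding bip_iso_def by blast
qed

lemma greaterThanLessThan_inj:
  fixes a b c d :: "'a::{conditionally_complete_linorder, dense_linorder}"
  assumes eq: "{a<..<b} = {c<..<d}" and "a < b"
  shows "a = c" "b = d"
proof -
  have "c < d" using eq \<open>a < b\<close> by (metis greaterThanLessThan_empty_iff not_less)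
  then show "a = c" "b = d" using assms by (metis cInf_greaterThanLessThan cSup_greaterThanLessThan)+
qed

lemma Times_greaterThanLessThan_inj:
  fixes a b c d a' b' c' d' :: "'a::{conditionally_complete_linorder, dense_linorder}"
  assumes eq: "{a<..<b} \<times> {c<..<d} = {a'<..<b'} \<times> {c'<..<d'}" and "a < b" "c < d"
  shows "a = a' \<and> b = b' \<and> c = c' \<and> d = d'"
proof -
  have "{a<..<b} \<noteq> {}" "{c<..<d} \<noteq> {}" using assms(2,3) by simp_all
  then have "{a<..<b} = {a'<..<b'}" "{c<..<d} = {c'<..<d'}" using eq unfolding times_eq_iff by blast+
  then show ?thesis using greaterThanLessThan_inj assms(2,3) by blast
qed

lemma finite_set_separated:
  fixes X :: "real set"
  assumes "finite X"
  obtains D where "D > 0" and "\<And>u v. u \<in> X \<Longrightarrow> v \<in> X \<Longrightarrow> u \<noteq> v \<Longrightarrow> D \<le> \<bar>u - v\<bar>"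
proof
  let ?gaps = "(\<lambda>(u, v). \<bar>u - v\<bar>) ` {(u, v) \<in> X \<times> X. u \<noteq> v}"
  have "finite ?gaps" using assms by (auto intro: finite_subset[of _ "X \<times> X"])
  then show "Min (insert 1 ?gaps) > 0" by auto
  show "Min (insert 1 ?gaps) \<le> \<bar>u - v\<bar>" if "u \<in> X" "v \<in> X" "u \<noteq> v" for u v
    using \<open>finite ?gaps\<close> that by (intro Min_le) auto
qed

lemma exists_small_scaling:
  fixes Y :: "real set"
  assumes "bdd_above (abs ` Y)" and "\<delta> > 0"
  obtains \<epsilon> where "\<epsilon> > 0" and "\<And>y. y \<in> Y \<Longrightarrow> \<bar>\<epsilon> * y\<bar> < \<delta>"
proof -
  obtain M where M: "\<And>y. y \<in> Y \<Longrightarrow> \<bar>y\<bar> \<le> M" using assms(1) by (auto simp: bdd_above_def)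
  show thesis
  proof
    show "\<delta> / (\<bar>M\<bar> + 1) > 0" using assms(2) by simp
    show "\<bar>\<delta> / (\<bar>M\<bar> + 1) * y\<bar> < \<delta>" if "y \<in> Y" for y
    proof -
      have "\<bar>y\<bar> < \<bar>M\<bar> + 1" using M[OF that] by linarith
      then have "\<delta> * \<bar>y\<bar> < \<delta> * (\<bar>M\<bar> + 1)" using assms(2) by (rule mult_strict_left_mono)
      then show ?thesis using assms(2) by (simp add: abs_mult field_simps)
    qed
  qed
qed

lemma perturbed_rect_incidence:
  fixes x y e a b c d D :: real
  assumes "x = a \<or> D \<le> \<bar>x - a\<bar>" and "x = b \<or> D \<le> \<bar>x - b\<bar>" and "\<bar>e\<bar> < D / 3"
  shows "(x, y) \<in> {a<..<b} \<times> {c<..<d} \<longleftrightarrow> (x + e, y) \<in> {a + D/3<..<b - D/3} \<times> {c<..<d}"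
proof -
  have "a < x \<longleftrightarrow> a + D/3 < x + e" using assms(1,3) by linarith
  moreover have "x < b \<longleftrightarrow> x + e < b - D/3" using assms(2,3) by linarith
  ultimately show ?thesis by auto
qed

locale shearing =
  fixes P :: "point set" and \<R> :: "point set set" and a b c d :: "point set \<Rightarrow> real" and D \<epsilon> :: real
  assumes sides: "\<And>R. R \<in> \<R> \<Longrightarrow> a R < b R \<and> c R < d R \<and> R = {a R<..<b R} \<times> {c R<..<d R}"
    and separated: "\<And>u v. u \<in> fst ` P \<union> a ` \<R> \<union> b ` \<R> \<Longrightarrow> v \<in> fst ` P \<union> a ` \<R> \<union> b ` \<R> \<Longrightarrow>
        u \<noteq> v \<Longrightarrow> D \<le> \<bar>u - v\<bar>"
    and gap_pos: "D > 0"
    and shear_pos: "\<epsilon> > 0"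
    and shear_small: "\<And>p. p \<in> P \<Longrightarrow> \<bar>\<epsilon> * snd p\<bar> < D / 3"
begin

definition shear :: "point \<Rightarrow> point" where
  "shear p = (fst p + \<epsilon> * snd p, snd p)"

definition shrink :: "point set \<Rightarrow> point set" where
  "shrink R = {a R + D/3<..<b R - D/3} \<times> {c R<..<d R}"

lemma inj_on_fst_shear: "inj_on (fst \<circ> shear) P"
proof (rule inj_onI)
  fix p q assume p: "p \<in> P" and q: "q \<in> P" and eq: "(fst \<circ> shear) p = (fst \<circ> shear) q"
  then have eq': "fst p + \<epsilon> * snd p = fst q + \<epsilon> * snd q" by (simp add: shear_def)
  have "fst p = fst q"
  proof (rule ccontr)
    assume "fst p \<noteq> fst q"
    then have "D \<le> \<bar>fst p - fst q\<bar>" using p q by (intro separated) auto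
    then show False using eq' shear_small[OF p] shear_small[OF q] gap_pos by linarith
  qed
  with eq' shear_pos show "p = q" by (simp add: prod_eq_iff)
qed

lemma shrink_wide:
  assumes "R \<in> \<R>"
  shows "a R + D/3 < b R - D/3"
proof -
  have "a R < b R" using sides[OF assms] by blast
  moreover have "D \<le> \<bar>a R - b R\<bar>" using assms calculation by (intro separated) auto
  ultimately show ?thesis using gap_pos by linarith
qed

lemma open_rect_shrink:
  assumes "R \<in> \<R>"
  shows "open_rect (shrink R)"
  unfolding open_rect_def shrink_def using shrink_wide[OF assms] sides[OF assms] by blast

lemma inj_on_shrink: "inj_on shrink \<R>"
proof (rule inj_onI)
  fix R R' assume R: "R \<in> \<R>" and R': "R' \<in> \<R>" and eq: "shrink R = shrink R'"
  have "a R + D/3 = a R' + D/3 \<and> b R - D/3 = b R' - D/3 \<and> c R = c R' \<and> d R = d R'"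
    using Times_greaterThanLessThan_inj[OF eq[unfolded shrink_def] shrink_wide[OF R]] sides[OF R] by blast
  then have "{a R<..<b R} \<times> {c R<..<d R} = {a R'<..<b R'} \<times> {c R'<..<d R'}" by simp
  then show "R = R'" using sides[OF R] sides[OF R'] by metis
qed

lemma shear_incidence:
  assumes p: "p \<in> P" and R: "R \<in> \<R>"
  shows "p \<in> R \<longleftrightarrow> shear p \<in> shrink R"
proof -
  have "fst p = a R \<or> D \<le> \<bar>fst p - a R\<bar>" "fst p = b R \<or> D \<le> \<bar>fst p - b R\<bar>"
    using separated[of "fst p" "a R"] separated[of "fst p" "b R"] p R by auto
  then have "(fst p, snd p) \<in> {a R<..<b R} \<times> {c R<..<d R} \<longleftrightarrow> shear p \<in> shrink R"
    unfolding shear_def shrink_def using shear_small[OF p] by (rule perturbed_rect_incidence)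
  then show ?thesis using sides[OF R] by (metis prod.collapse)
qed

end

lemma exists_isomorphic_config_with_distinct_abscissae:
  assumes "finite P" and "finite \<R>" and "\<forall>R\<in>\<R>. open_rect R"
  obtains P1 \<R>1 where "finite P1" and "finite \<R>1" and "\<forall>R\<in>\<R>1. open_rect R" and "inj_on fst P1"
    and "bip_iso P \<R> incidence P1 \<R>1 incidence"
proof -
  obtain a b c d where sides: "\<And>R. R \<in> \<R> \<Longrightarrow> a R < b R \<and> c R < d R \<and> R = {a R<..<b R} \<times> {c R<..<d R}"
    using assms(3) unfolding open_rect_def by metis
  let ?X = "fst ` P \<union> a ` \<R> \<union> b ` \<R>"
  obtain D where "D > 0" and sep: "\<And>u v. u \<in> ?X \<Longrightarrow> v \<in> ?X \<Longrightarrow> u \<noteq> v \<Longrightarrow> D \<le> \<bar>u - v\<bar>"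
    using finite_set_separated[of ?X] assms(1,2) by blast
  obtain \<epsilon> where "\<epsilon> > 0" and small: "\<And>y. y \<in> snd ` P \<Longrightarrow> \<bar>\<epsilon> * y\<bar> < D / 3"
    using exists_small_scaling[of "snd ` P" "D / 3"] assms(1) \<open>D > 0\<close> by (auto intro: bdd_above_finite)
  interpret shearing P \<R> a b c d D \<epsilon>
    using sides sep \<open>D > 0\<close> \<open>\<epsilon> > 0\<close> small by unfold_locales auto
  show thesis
  proof (rule that)
    show "finite (shear ` P)" "finite (shrink ` \<R>)" using assms(1,2) by simp_all
    show "\<forall>R\<in>shrink ` \<R>. open_rect R" using open_rect_shrink by blast
    show "inj_on fst (shear ` P)" using inj_on_imageI[OF inj_on_fst_shear] .
    show "bip_iso P \<R> incidence (shear ` P) (shrink ` \<R>) incidence"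
      using inj_on_imageI2[OF inj_on_fst_shear] inj_on_shrink shear_incidence
      by (intro bip_isoI_image) (simp_all add: incidence_def)
  qed
qed

lemma open_rect_nonempty:
  assumes "open_rect R"
  shows "R \<noteq> {}"
  using assms unfolding open_rect_def by auto

lemma open_rect_snd_bdd_above:
  assumes "open_rect R"
  shows "bdd_above ((\<lambda>z. \<bar>snd z\<bar>) ` R)"
proof -
  obtain a b c d where "R = {a<..<b} \<times> {c<..<d}"
    using assms unfolding open_rect_def by blast
  then show ?thesis by (intro bdd_aboveI2[where M = "\<bar>c\<bar> + \<bar>d\<bar>"]) auto
qed

definition shift_up :: "real \<Rightarrow> point \<Rightarrow> point" where
  "shift_up t z = (fst z, snd z + t)"

lemma shift_up_shift_up [simp]: "shift_up s (shift_up t z) = shift_up (s + t) z"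
  by (simp add: shift_up_def add.assoc add.commute)

lemma shift_up_0 [simp]: "shift_up 0 z = z"
  by (simp add: shift_up_def)

lemma inj_shift_up: "inj (shift_up t)"
  by (rule injI) (simp add: shift_up_def prod_eq_iff)

lemma mem_shift_up_image_iff: "z \<in> shift_up t ` R \<longleftrightarrow> shift_up (- t) z \<in> R"
proof -
  have "z = shift_up t w \<longleftrightarrow> w = shift_up (- t) z" for w
    unfolding shift_up_def by (auto simp: prod_eq_iff)
  then show ?thesis by (simp add: image_iff)
qed

lemma open_rect_shift_up_image:
  assumes "open_rect R"
  shows "open_rect (shift_up t ` R)"
proof -
  obtain a b c d where "a < b" "c < d" and R: "R = {a<..<b} \<times> {c<..<d}"
    using assms unfolding open_rect_def by blast
  have "shift_up t ` R = {a<..<b} \<times> {c + t<..<d + t}"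
  proof (rule set_eqI)
    fix z :: point
    show "z \<in> shift_up t ` R \<longleftrightarrow> z \<in> {a<..<b} \<times> {c + t<..<d + t}"
      unfolding mem_shift_up_image_iff R by (cases z) (auto simp: shift_up_def)
  qed
  moreover have "c + t < d + t" using \<open>c < d\<close> by simp
  ultimately show ?thesis unfolding open_rect_def using \<open>a < b\<close> by blast
qed

lemma eq_if_shift_stays_in_strip:
  fixes i j :: nat and y H T :: real
  assumes "\<bar>y\<bar> \<le> H" and "\<bar>y + (real i - real j) * T\<bar> \<le> H" and "2 * H < T"
  shows "i = j"
proof (rule ccontr)
  assume "i \<noteq> j"
  then have "1 \<le> \<bar>real i - real j\<bar>" by linarith
  moreover have "T > 0" using assms(1,3) by linarith
  ultimately have "T \<le> \<bar>(real i - real j) * T\<bar>" by (simp add: abs_mult)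
  then show False using assms by linarith
qed

locale stacking =
  fixes P :: "point set" and \<R> :: "point set set" and k :: nat and H T \<gamma> :: real
  assumes open_rects: "\<And>R. R \<in> \<R> \<Longrightarrow> open_rect R"
    and points_in_strip: "\<And>p. p \<in> P \<Longrightarrow> \<bar>snd p\<bar> \<le> H"
    and rects_in_strip: "\<And>R z. R \<in> \<R> \<Longrightarrow> z \<in> R \<Longrightarrow> \<bar>snd z\<bar> \<le> H"
    and strip_nonneg: "0 \<le> H"
    and period: "2 * H < T"
    and pole_width: "\<gamma> > 0"
    and abscissae_separated: "\<And>p q. p \<in> P \<Longrightarrow> q \<in> P \<Longrightarrow> \<bar>fst p - fst q\<bar> < \<gamma> \<Longrightarrow> p = q"
begin

definition stack_point :: "point \<times> nat \<Rightarrow> point" where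
  "stack_point = (\<lambda>(p, i). shift_up (real i * T) p)"

definition pole :: "point \<Rightarrow> point set" where
  "pole q = {fst q - \<gamma><..<fst q + \<gamma>} \<times> {- T<..<real (k + 1) * T}"

definition stack_rect :: "(point set \<times> nat) + point \<Rightarrow> point set" where
  "stack_rect = case_sum (\<lambda>(R, j). shift_up (real j * T) ` R) pole"

lemma period_pos: "T > 0"
  using period strip_nonneg by linarith

lemma pole_height: "T \<le> real (k + 1) * T"
  using period_pos by (simp add: mult_le_cancel_right1)

lemma mem_pole_iff: "z \<in> pole q \<longleftrightarrow> \<bar>fst z - fst q\<bar> < \<gamma> \<and> - T < snd z \<and> snd z < real (k + 1) * T"
  by (cases z) (auto simp: pole_def abs_less_iff)

lemma shift_up_in_shifted_rect_iff:
  assumes "z \<in> P \<union> \<Union>\<R>" and "R \<in> \<R>"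
  shows "shift_up (real i * T) z \<in> shift_up (real j * T) ` R \<longleftrightarrow> i = j \<and> z \<in> R"
proof (cases "i = j")
  case True
  then show ?thesis by (simp add: mem_shift_up_image_iff)
next
  case False
  have "\<bar>snd z\<bar> \<le> H" using assms points_in_strip rects_in_strip by blast
  then have "(fst z, snd z + (real i - real j) * T) \<notin> R"
    using eq_if_shift_stays_in_strip[OF _ _ period] False rects_in_strip[OF assms(2)] by fastforce
  moreover have "shift_up (- (real j * T) + real i * T) z = (fst z, snd z + (real i - real j) * T)"
    by (simp add: shift_up_def algebra_simps)
  ultimately show ?thesis using False by (simp add: mem_shift_up_image_iff)
qed

lemma shift_up_in_pole_iff:
  assumes "p \<in> P" and "q \<in> P" and "1 \<le> i" and "i \<le> k"
  shows "shift_up (real i * T) p \<in> pole q \<longleftrightarrow> p = q"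
proof -
  have "T \<le> real i * T" using assms(3) period_pos by (simp add: mult_le_cancel_right1)
  moreover have "real i * T \<le> real k * T" using assms(4) period_pos by (intro mult_right_mono) simp_all
  moreover have "real (k + 1) * T = real k * T + T" by (simp add: distrib_right)
  moreover have "- H \<le> snd p" "snd p \<le> H" using points_in_strip[OF assms(1)] by simp_all
  ultimately have "- T < snd p + real i * T" "snd p + real i * T < real (k + 1) * T"
    using period strip_nonneg by linarith+
  moreover have "\<bar>fst p - fst q\<bar> < \<gamma> \<longleftrightarrow> p = q"
    using abscissae_separated[OF assms(1,2)] pole_width by auto
  ultimately show ?thesis by (simp add: mem_pole_iff shift_up_def)
qed

lemma stack_incidence:
  assumes "x \<in> tensorA P k" and "y \<in> tensorB P \<R> k"
  shows "tensorE incidence x y \<longleftrightarrow> incidence (stack_point x) (stack_rect y)"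
proof -
  obtain p i where x: "x = (p, i)" and "p \<in> P" "1 \<le> i" "i \<le> k"
    using assms(1) by (rule mem_tensorAE)
  from assms(2) show ?thesis
  proof (cases rule: mem_tensorBE)
    case (copy R j)
    then show ?thesis
      using shift_up_in_shifted_rect_iff[of p R i j] \<open>p \<in> P\<close>
      by (auto simp: x incidence_def stack_point_def stack_rect_def)
  next
    case (orig q)
    then show ?thesis
      using shift_up_in_pole_iff[of p q i] \<open>p \<in> P\<close> \<open>1 \<le> i\<close> \<open>i \<le> k\<close>
      by (auto simp: x incidence_def stack_point_def stack_rect_def)
  qed
qed

lemma inj_on_stack_point: "inj_on stack_point (tensorA P k)"
proof (rule inj_onI)
  fix x y assume "x \<in> tensorA P k" "y \<in> tensorA P k" "stack_point x = stack_point y"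
  then obtain p i q j where "x = (p, i)" "y = (q, j)" "p \<in> P" "q \<in> P"
    and "fst p = fst q" "snd p + real i * T = snd q + real j * T"
    by (auto elim!: mem_tensorAE simp: stack_point_def shift_up_def)
  moreover from this have "p = q" using abscissae_separated pole_width by simp
  ultimately show "x = y" using period_pos by simp
qed

lemma shifted_rects_eq_iff:
  assumes "R \<in> \<R>" and "R' \<in> \<R>"
  shows "shift_up (real i * T) ` R = shift_up (real j * T) ` R' \<longleftrightarrow> i = j \<and> R = R'"
proof
  assume eq: "shift_up (real i * T) ` R = shift_up (real j * T) ` R'"
  obtain z where "z \<in> R"
    using open_rect_nonempty[OF open_rects[OF assms(1)]] by blast
  then have "shift_up (real i * T) z \<in> shift_up (real j * T) ` R'" using eq by blast
  then have "i = j" using shift_up_in_shifted_rect_iff[of z R' i j] \<open>z \<in> R\<close> assms by blast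
  then show "i = j \<and> R = R'" using eq inj_image_eq_iff[OF inj_shift_up] by simp
qed simp

lemma pole_neq_shifted_rect:
  assumes "R \<in> \<R>"
  shows "pole q \<noteq> shift_up (real j * T) ` R"
proof
  assume eq: "pole q = shift_up (real j * T) ` R"
  have "- T < - T / 2" "- T / 2 < real (k + 1) * T" "- T < T / 2" "T / 2 < real (k + 1) * T"
    using period_pos pole_height by linarith+
  then have "(fst q, - T / 2) \<in> pole q" "(fst q, T / 2) \<in> pole q"
    using pole_width by (simp_all add: mem_pole_iff)
  then have "\<bar>- T / 2 - real j * T\<bar> \<le> H" "\<bar>T / 2 - real j * T\<bar> \<le> H"
    unfolding eq mem_shift_up_image_iff using rects_in_strip[OF assms] by (fastforce simp: shift_up_def)+
  then show False using period by linarith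
qed

lemma pole_inj:
  assumes "q \<in> P" and "q' \<in> P" and "pole q = pole q'"
  shows "q = q'"
proof -
  have "(fst q, 0) \<in> pole q" using period_pos pole_width by (simp add: mem_pole_iff)
  then have "\<bar>fst q - fst q'\<bar> < \<gamma>" unfolding assms(3) by (simp add: mem_pole_iff)
  then show ?thesis using abscissae_separated assms(1,2) by blast
qed

lemma inj_on_stack_rect: "inj_on stack_rect (tensorB P \<R> k)"
proof (rule inj_onI)
  fix x y assume x: "x \<in> tensorB P \<R> k" and y: "y \<in> tensorB P \<R> k" and eq: "stack_rect x = stack_rect y"
  from x show "x = y"
  proof (cases rule: mem_tensorBE)
    case (copy R i)
    from y show ?thesis
    proof (cases rule: mem_tensorBE)
      case (copy R' j)
      then show ?thesis using eq \<open>x = Inl (R, i)\<close> \<open>R \<in> \<R>\<close> shifted_rects_eq_iff[of R R' i j]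
        by (simp add: stack_rect_def)
    next
      case (orig q')
      then show ?thesis using eq \<open>x = Inl (R, i)\<close> pole_neq_shifted_rect[OF \<open>R \<in> \<R>\<close>, of q' i]
        by (simp add: stack_rect_def)
    qed
  next
    case (orig q)
    from y show ?thesis
    proof (cases rule: mem_tensorBE)
      case (copy R' j)
      then show ?thesis using eq \<open>x = Inr q\<close> pole_neq_shifted_rect[of R' q j]
        by (simp add: stack_rect_def)
    next
      case (orig q')
      then show ?thesis using eq \<open>x = Inr q\<close> \<open>q \<in> P\<close> pole_inj[of q q']
        by (simp add: stack_rect_def)
    qed
  qed
qed

lemma open_rect_stack_rect:
  assumes "y \<in> tensorB P \<R> k"
  shows "open_rect (stack_rect y)"
proof -
  have "- T < real (k + 1) * T" using period_pos pole_height by linarith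
  then have pole_open: "open_rect (pole q)" for q
    unfolding open_rect_def pole_def using pole_width
    by (intro exI[of _ "fst q - \<gamma>"] exI[of _ "fst q + \<gamma>"] exI[of _ "- T"] exI[of _ "real (k + 1) * T"]) simp
  from assms show ?thesis
  proof (cases rule: mem_tensorBE)
    case (copy R j)
    then show ?thesis using open_rect_shift_up_image open_rects by (simp add: stack_rect_def)
  next
    case (orig q)
    then show ?thesis using pole_open by (simp add: stack_rect_def)
  qed
qed

end

lemma exists_config_realizing_tensor:
  assumes "finite P" and "finite \<R>" and "\<forall>R\<in>\<R>. open_rect R" and "inj_on fst P"
  obtains P' \<R>' where "finite P'" and "finite \<R>'" and "\<forall>R\<in>\<R>'. open_rect R"
    and "bip_iso (tensorA P k) (tensorB P \<R> k) (tensorE incidence) P' \<R>' incidence"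
proof -
  have "bdd_above ((\<lambda>z. \<bar>snd z\<bar>) ` P)"
    using assms(1) by (intro bdd_above_finite) simp
  moreover have "bdd_above ((\<lambda>z. \<bar>snd z\<bar>) ` \<Union>\<R>)"
    unfolding image_Union using assms(2,3) open_rect_snd_bdd_above by simp
  ultimately have "bdd_above ((\<lambda>z. \<bar>snd z\<bar>) ` (P \<union> \<Union>\<R>))"
    by (simp add: image_Un)
  then obtain H where "\<forall>x\<in>(\<lambda>z. \<bar>snd z\<bar>) ` (P \<union> \<Union>\<R>). x \<le> H"
    unfolding bdd_above_def by blast
  then have H: "\<bar>snd z\<bar> \<le> \<bar>H\<bar>" if "z \<in> P \<union> \<Union>\<R>" for z
  proof -
    have "\<bar>snd z\<bar> \<le> H" using \<open>\<forall>x\<in>_. x \<le> H\<close> that by blast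
    then show ?thesis using abs_ge_self[of H] by linarith
  qed
  obtain D where "D > 0" and sep: "\<And>u v. u \<in> fst ` P \<Longrightarrow> v \<in> fst ` P \<Longrightarrow> u \<noteq> v \<Longrightarrow> D \<le> \<bar>u - v\<bar>"
    using finite_set_separated[of "fst ` P"] assms(1) by blast
  have "stacking P \<R> \<bar>H\<bar> (2 * \<bar>H\<bar> + 1) D"
  proof unfold_locales
    show "open_rect R" if "R \<in> \<R>" for R using assms(3) that by blast
    show "\<bar>snd p\<bar> \<le> \<bar>H\<bar>" if "p \<in> P" for p using H that by blast
    show "\<bar>snd z\<bar> \<le> \<bar>H\<bar>" if "R \<in> \<R>" "z \<in> R" for R z using H that by blast
    show "p = q" if "p \<in> P" "q \<in> P" "\<bar>fst p - fst q\<bar> < D" for p q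
    proof (rule ccontr)
      assume "p \<noteq> q"
      then have "fst p \<noteq> fst q" using inj_onD[OF assms(4)] that(1,2) by blast
      then have "D \<le> \<bar>fst p - fst q\<bar>" using sep that(1,2) by blast
      with that(3) show False by linarith
    qed
  qed (use \<open>D > 0\<close> in simp_all)
  then interpret stacking P \<R> k "\<bar>H\<bar>" "2 * \<bar>H\<bar> + 1" D .
  have "finite (tensorA P k)" "finite (tensorB P \<R> k)"
    using assms(1,2) by (simp_all add: tensorA_def tensorB_def)
  show thesis
  proof (rule that)
    show "finite (stack_point ` tensorA P k)" "finite (stack_rect ` tensorB P \<R> k)"
      using \<open>finite (tensorA P k)\<close> \<open>finite (tensorB P \<R> k)\<close> by simp_all
    show "\<forall>R\<in>stack_rect ` tensorB P \<R> k. open_rect R"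
      using open_rect_stack_rect by blast
    show "bip_iso (tensorA P k) (tensorB P \<R> k) (tensorE incidence)
        (stack_point ` tensorA P k) (stack_rect ` tensorB P \<R> k) incidence"
      using inj_on_stack_point inj_on_stack_rect stack_incidence by (rule bip_isoI_image)
  qed
qed

theorem lemma5p4:
  fixes P :: "point set" and \<R> :: "point set set" and k :: nat
  assumes "finite P" and "finite \<R>" and "\<forall>R\<in>\<R>. open_rect R" and "k > 0"
  shows "\<exists>(P' :: point set) (\<R>' :: point set set).
           finite P' \<and> finite \<R>' \<and> (\<forall>R\<in>\<R>'. open_rect R) \<and>
           bip_iso (tensorA P k) (tensorB P \<R> k) (tensorE incidence) P' \<R>' incidence"
proof -
  \<comment> \<open>The construction works for \<open>k = 0\<close> as well.\<close>
  obtain P1 \<R>1 where config1: "finite P1" "finite \<R>1" "\<forall>R\<in>\<R>1. open_rect R" "inj_on fst P1"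
    and iso: "bip_iso P \<R> incidence P1 \<R>1 incidence"
    using assms(1-3) by (rule exists_isomorphic_config_with_distinct_abscissae)
  from config1 obtain P' \<R>' where "finite P'" and "finite \<R>'" and "\<forall>R\<in>\<R>'. open_rect R"
    and iso': "bip_iso (tensorA P1 k) (tensorB P1 \<R>1 k) (tensorE incidence) P' \<R>' incidence"
    by (rule exists_config_realizing_tensor)
  have "bip_iso (tensorA P k) (tensorB P \<R> k) (tensorE incidence) P' \<R>' incidence"
    using bip_iso_tensor[OF iso] iso' by (rule bip_iso_trans)
  then show ?thesis
    using \<open>finite P'\<close> \<open>finite \<R>'\<close> \<open>\<forall>R\<in>\<R>'. open_rect R\<close> by blast
qed

end
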